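(* Let $\mathbf{X}$ be a Markov chain on $\mathbb{R}^d$ given by $X(t+1)=a(X(t),N(t+1))$, where $\mathbf{N}$ is an i.i.d. sequence in $\mathbb{R}^m$ and $a:\mathbb{R}^{d}\times\mathbb{R}^m\to\mathbb{R}^d$ is continuous. Assume (A1), (A2), (A3) below. Let $\alpha\in(0,1)$ and let $\psi:\mathbb{R}^d\to\mathbb{R}^\ell$ be continuously differentiable with $\|\psi\|^2\in L_\infty^v$ and $\|\nabla\psi\|^2\in L_\infty^v$. Then there is a version of the pair process $(\mathbf{X},\boldsymbol{\varphi})$, indexed by $t\in\mathbb{Z}$, that is stationary, with $$\varphi(t)=\sum_{k=0}^\infty\alpha^k\,[\mathcal{A}(t-k+1)\mathcal{A}(t-k+2)\cdots\mathcal{A}(t)]^{T}\,\nabla\psi(X(t-k)),\qquad t\in\mathbb{Z},$$ where the matrix product is the identity for $k=0$ and $\mathcal{A}(s)=\nabla a(X(s-1),N(s))$. (This process satisfies $\varphi(t)=\alpha\mathcal{A}^{T}(t)\varphi(t-1)+\nabla\psi(X(t))$.)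
   Context: Notation: $v:\mathbb{R}^d\to[1,\infty)$ is a fixed continuous function; $\|f\|_v=\sup_x|f(x)|/v(x)$ and $L_\infty^v=\{f \text{ measurable}:\|f\|_v<\infty\}$. $\nabla a(x,n)$ is the $d\times d$ matrix whose $i$th column is $\nabla_x a_i(x,n)$ (gradient in the first variable). $\nabla\psi(x)$ is the $d\times\ell$ matrix with entries $[\nabla\psi(x)]_{i,j}=\partial\psi_j(x)/\partial x_i$. The sensitivity process is $\mathcal{S}(0)=I$, $\mathcal{S}(t+1)=\mathcal{A}^{T}(t+1)\mathcal{S}(t)$, i.e. $\mathcal{S}_{ij}(t)=\partial X_i(t)/\partial X_j(0)$. (A1) $v$-uniform ergodicity: there exist a unique invariant probability measure $\pi$, $b_0<\infty$ and $0<\rho_0<1$ such that for each $f\in L_\infty^v$, $|\mathsf{E}_x[f(X(t))]-\pi(f)|\le b_0\rho_0^t\|f\|_v v(x)$ for all $t\ge0$, $x\in\mathbb{R}^d$. (A2) The disturbance process $\mathbf{N}$ does not depend on the initial condition $X(0)$; and $a$ is continuously differentiable in its first variable with $\sup_{x,n}\|\nabla a(x,n)\|<\infty$ for some matrix norm. (A3) For any $C^1$ functions $f,g:\mathbb{R}^d\to\mathbb{R}$ with $f^2,g^2,\|\nabla f\|^2,\|\nabla g\|^2\in L_\infty^v$, for the stationary version of the chain (marginal $\pi$): $\sum_{t=0}^\infty\big|\mathsf{E}_\pi[\nabla f(X(t))^{T}\mathcal{S}(t)\nabla g(X(0))]\big|<\infty$ and $\sum_{t=0}^\infty\mathsf{E}_\pi\big[|\nabla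 f(X(t))^{T}\mathcal{S}(t)\nabla g(X(0))|\big]<\infty$. *)

theory Defs
  imports "HOL-Probability.Probability"
begin

definition in_Linf_v :: "('a::euclidean_space \<Rightarrow> real) \<Rightarrow> ('a \<Rightarrow> real) \<Rightarrow> bool" where
  "in_Linf_v v f \<longleftrightarrow> f \<in> borel_measurable borel \<and> bdd_above (range (\<lambda>x. \<bar>f x\<bar> / v x))"

definition vnorm :: "('a \<Rightarrow> real) \<Rightarrow> ('a \<Rightarrow> real) \<Rightarrow> real" where
  "vnorm v f = (SUP x. \<bar>f x\<bar> / v x)"

text \<open>Sample path X(t) of the chain from X(0)=x, where ns t plays the role of N(t+1).\<close>
primrec chain :: "('d \<Rightarrow> 'm \<Rightarrow> 'd) \<Rightarrow> 'd \<Rightarrow> (nat \<Rightarrow> 'm) \<Rightarrow> nat \<Rightarrow> 'd" where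
  "chain a x ns 0 = x"
| "chain a x ns (Suc t) = a (chain a x ns t) (ns t)"

definition Ex_chain :: "('d::euclidean_space \<Rightarrow> 'm \<Rightarrow> 'd) \<Rightarrow> 'm measure \<Rightarrow> 'd \<Rightarrow> ('d \<Rightarrow> real) \<Rightarrow> nat \<Rightarrow> real" where
  "Ex_chain a \<mu> x f t = (\<integral>ns. f (chain a x ns t) \<partial>(\<Pi>\<^sub>M i\<in>(UNIV::nat set). \<mu>))"

definition invariant_for :: "('d::euclidean_space \<Rightarrow> 'm \<Rightarrow> 'd) \<Rightarrow> 'm measure \<Rightarrow> 'd measure \<Rightarrow> bool" where
  "invariant_for a \<mu> \<pi> \<longleftrightarrow>
     (\<forall>A\<in>sets borel. emeasure \<pi> A = (\<integral>\<^sup>+x. emeasure \<mu> {n\<in>space \<mu>. a x n \<in> A} \<partial>\<pi>))"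

primrec sens :: "(real^'d \<Rightarrow> 'm \<Rightarrow> real^'d^'d) \<Rightarrow> (real^'d \<Rightarrow> 'm \<Rightarrow> real^'d)
                  \<Rightarrow> real^'d \<Rightarrow> (nat \<Rightarrow> 'm) \<Rightarrow> nat \<Rightarrow> real^'d^'d" where
  "sens Ga a x ns 0 = mat 1"
| "sens Ga a x ns (Suc t) = transpose (Ga (chain a x ns t) (ns t)) ** sens Ga a x ns t"

text \<open>prodA A t k = A(t-k+1) A(t-k+2) ... A(t) (identity for k = 0).\<close>
primrec prodA :: "(int \<Rightarrow> real^'d^'d) \<Rightarrow> int \<Rightarrow> nat \<Rightarrow> real^'d^'d" where
  "prodA A t 0 = mat 1"
| "prodA A t (Suc k) = A (t - int k) ** prodA A t k"

definition phi_term :: "real \<Rightarrow> (int \<Rightarrow> real^'d^'d) \<Rightarrow> (real^'d \<Rightarrow> real^'l^'d)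
                         \<Rightarrow> (int \<Rightarrow> real^'d) \<Rightarrow> int \<Rightarrow> nat \<Rightarrow> real^'l^'d" where
  "phi_term \<alpha> A G Xs t k = (\<alpha> ^ k) *\<^sub>R (transpose (prodA A t k) ** G (Xs (t - int k)))"

definition phi :: "real \<Rightarrow> (int \<Rightarrow> real^'d^'d) \<Rightarrow> (real^'d \<Rightarrow> real^'l^'d)
                     \<Rightarrow> (int \<Rightarrow> real^'d) \<Rightarrow> int \<Rightarrow> real^'l^'d" where
  "phi \<alpha> A G Xs t = (\<Sum>k. phi_term \<alpha> A G Xs t k)"

end

theory Submission
  imports Defs
begin

text \<open>
  Because \<open>\<pi>\<close> is invariant, the chain started in \<open>\<pi>\<close> and driven by i.i.d. noise has a
  shift-invariant path law. Its finite-dimensional distributions, placed at arbitrary integer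
  times, are therefore consistent, and the Kolmogorov extension theorem yields a stationary
  chain indexed by \<open>\<int>\<close>. Each \<open>\<phi>(t)\<close> is the same measurable function of the path shifted by
  \<open>t\<close>, so \<open>(X, \<phi>)\<close> is stationary as well. The series for \<open>\<phi>(t)\<close> converges almost surely:
  every entry of its \<open>k\<close>-th term is dominated by quantities
  \<open>\<bar>\<nabla>f(X(k))\<^sup>T \<S>(k) \<nabla>g(X(0))\<bar>\<close> of the stationary chain, with \<open>f\<close> a sine or cosine of a
  coordinate and \<open>g\<close> a component of \<open>\<psi>\<close>, whose expectations are summable by (A3).
\<close>

lemma borel_measurable_continuous_on2:
  fixes h :: "'a::second_countable_topology \<Rightarrow> 'b::second_countable_topology \<Rightarrow> 'c::topological_space"
  assumes h: "continuous_on UNIV (\<lambda>p. h (fst p) (snd p))"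
    and f: "f \<in> borel_measurable M" and g: "g \<in> borel_measurable M"
  shows "(\<lambda>x. h (f x) (g x)) \<in> borel_measurable M"
proof -
  have "(\<lambda>x. (f x, g x)) \<in> borel_measurable M"
    using measurable_Pair[OF f g] by (simp only: borel_prod)
  from measurable_compose[OF this borel_measurable_continuous_onI[OF h]] show ?thesis
    by simp
qed

lemma borel_measurable_matrix_matrix_mult:
  fixes f :: "'a \<Rightarrow> real^'n^'k" and g :: "'a \<Rightarrow> real^'j^'n"
  assumes "f \<in> borel_measurable M" "g \<in> borel_measurable M"
  shows "(\<lambda>x. f x ** g x) \<in> borel_measurable M"
proof (rule borel_measurable_continuous_on2[OF _ assms])
  show "continuous_on UNIV (\<lambda>p::(real^'n^'k) \<times> (real^'j^'n). fst p ** snd p)"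
    unfolding matrix_matrix_mult_def by (intro continuous_intros)
qed

lemma borel_measurable_matrix_vector_mult:
  fixes f :: "'a \<Rightarrow> real^'n^'k" and g :: "'a \<Rightarrow> real^'n"
  assumes "f \<in> borel_measurable M" "g \<in> borel_measurable M"
  shows "(\<lambda>x. f x *v g x) \<in> borel_measurable M"
proof (rule borel_measurable_continuous_on2[OF _ assms])
  show "continuous_on UNIV (\<lambda>p::(real^'n^'k) \<times> (real^'n). fst p *v snd p)"
    unfolding matrix_vector_mult_def by (intro continuous_intros)
qed

lemma borel_measurable_transpose:
  fixes f :: "'a \<Rightarrow> real^'n^'k"
  assumes "f \<in> borel_measurable M"
  shows "(\<lambda>x. transpose (f x)) \<in> borel_measurable M"
proof -
  have "continuous_on UNIV (\<lambda>A::real^'n^'k. transpose A)"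
    unfolding transpose_def by (intro continuous_intros)
  from measurable_compose[OF assms borel_measurable_continuous_onI[OF this]] show ?thesis
    by simp
qed

lemma difference_quotient_tendsto:
  fixes f :: "'a::real_normed_vector \<Rightarrow> real"
  assumes f: "(f has_derivative f') (at x)"
  shows "((\<lambda>t. (f (x + t *\<^sub>R h) - f x) / t) \<longlongrightarrow> f' h) (at 0)"
proof -
  have line: "((\<lambda>t. x + t *\<^sub>R h) has_derivative (\<lambda>t. t *\<^sub>R h)) (at 0)"
    by (auto intro!: derivative_eq_intros)
  have "linear f'"
    using f by (rule has_derivative_linear)
  moreover have "((\<lambda>t. f (x + t *\<^sub>R h)) has_derivative (\<lambda>t. f' (t *\<^sub>R h))) (at 0)"
    using diff_chain_at[OF line] f by (simp add: comp_def)
  ultimately have "((\<lambda>t. f (x + t *\<^sub>R h)) has_real_derivative f' h) (at 0)"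
    by (simp add: has_real_derivative_iff_has_vector_derivative has_vector_derivative_def linear_cmul)
  then show ?thesis
    by (simp add: DERIV_def)
qed

lemma inverse_Suc_at_0: "filterlim (\<lambda>k. 1 / real (Suc k)) (at (0::real)) sequentially"
  by (rule filterlim_atI) (use LIMSEQ_Suc[OF lim_1_over_n] in simp_all)

lemma axis_vector_matrix_mult: "axis i 1 v* (G::real^'n^'m) = G $ i"
  by (simp add: vec_eq_iff vector_matrix_mult_def axis_def if_distrib[of "\<lambda>x. x * _"] cong: if_cong)

text \<open>The Jacobian is a pointwise limit of continuous difference quotients; no continuity
  of the Jacobian itself is needed.\<close>

lemma borel_measurable_jacobian:
  fixes a :: "real^'d \<Rightarrow> 'n::second_countable_topology \<Rightarrow> real^'k"
    and Ga :: "real^'d \<Rightarrow> 'n \<Rightarrow> real^'k^'d"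
  assumes cont: "continuous_on UNIV (\<lambda>(x, n). a x n)"
    and deriv: "\<And>x n. ((\<lambda>y. a y n) has_derivative (\<lambda>h. h v* Ga x n)) (at x)"
  shows "(\<lambda>p. Ga (fst p) (snd p)) \<in> borel_measurable borel"
proof -
  define quot :: "nat \<Rightarrow> (real^'d) \<times> 'n \<Rightarrow> real^'k^'d" where
    "quot k p = (\<chi> i j. (a (fst p + (1 / real (Suc k)) *\<^sub>R axis i 1) (snd p) $ j
                          - a (fst p) (snd p) $ j) / (1 / real (Suc k)))" for k p
  have a2: "continuous_on UNIV (\<lambda>p. a (fst p) (snd p))"
    using cont by (simp add: case_prod_beta')
  have "quot k \<in> borel_measurable borel" for k
  proof (rule borel_measurable_continuous_onI)
    have "continuous_on UNIV (\<lambda>p. a (fst p + (1 / real (Suc k)) *\<^sub>R axis i 1) (snd p))" for i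
      using continuous_on_compose2[OF a2, of UNIV "\<lambda>p. (fst p + (1 / real (Suc k)) *\<^sub>R axis i 1, snd p)"]
      by (simp add: continuous_intros)
    then show "continuous_on UNIV (quot k)"
      unfolding quot_def by (intro continuous_on_vec_lambda continuous_intros a2) simp_all
  qed
  moreover have "(\<lambda>k. quot k p) \<longlonglongrightarrow> Ga (fst p) (snd p)" for p
  proof (intro vec_tendstoI)
    fix i j
    have "((\<lambda>y. a y (snd p) $ j) has_derivative (\<lambda>h. (h v* Ga (fst p) (snd p)) $ j)) (at (fst p))"
      by (rule bounded_linear.has_derivative[OF bounded_linear_vec_nth deriv])
    from filterlim_compose[OF difference_quotient_tendsto[OF this, of "axis i 1"] inverse_Suc_at_0]
    show "(\<lambda>k. quot k p $ i $ j) \<longlonglongrightarrow> Ga (fst p) (snd p) $ i $ j"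
      by (simp add: quot_def axis_vector_matrix_mult)
  qed
  ultimately show ?thesis
    by (rule borel_measurable_LIMSEQ_metric)
qed

lemma nn_integral_sum3:
  fixes f :: "'i \<Rightarrow> 'j \<Rightarrow> 'k \<Rightarrow> 'a \<Rightarrow> ennreal"
  assumes "\<And>i j b. f i j b \<in> borel_measurable M"
  shows "(\<integral>\<^sup>+x. (\<Sum>i\<in>I. \<Sum>j\<in>J. \<Sum>b\<in>K. f i j b x) \<partial>M) = (\<Sum>i\<in>I. \<Sum>j\<in>J. \<Sum>b\<in>K. \<integral>\<^sup>+x. f i j b x \<partial>M)"
  using assms by (simp add: nn_integral_sum borel_measurable_sum)

lemma AE_summable_if_nn_integral_suminf_finite:
  fixes f :: "nat \<Rightarrow> 'a \<Rightarrow> 'b::banach"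
  assumes f: "\<And>k. f k \<in> borel_measurable M"
    and fin: "(\<Sum>k. \<integral>\<^sup>+\<omega>. ennreal (norm (f k \<omega>)) \<partial>M) < \<top>"
  shows "AE \<omega> in M. summable (\<lambda>k. f k \<omega>)"
proof -
  have nf: "(\<lambda>\<omega>. ennreal (norm (f k \<omega>))) \<in> borel_measurable M" for k
    using f by measurable
  have suminf_meas: "(\<lambda>\<omega>. \<Sum>k. ennreal (norm (f k \<omega>))) \<in> borel_measurable M"
    using f by measurable
  have "(\<integral>\<^sup>+\<omega>. (\<Sum>k. ennreal (norm (f k \<omega>))) \<partial>M) < \<infinity>"
    using fin by (simp add: nn_integral_suminf[OF nf])
  from finite_nn_integral_imp_ae_finite[OF suminf_meas this] show ?thesis
  proof (rule eventually_mono)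
    fix \<omega> assume "(\<Sum>k. ennreal (norm (f k \<omega>))) < \<infinity>"
    then have "summable (\<lambda>k. norm (f k \<omega>))"
      by (intro summable_suminf_not_top) auto
    then show "summable (\<lambda>k. f k \<omega>)"
      by (rule summable_norm_cancel)
  qed
qed

section \<open>Test functions for (A3)\<close>

lemma in_Linf_v_mono:
  assumes v: "\<And>x. 0 \<le> v x" and g: "g \<in> borel_measurable borel"
    and le: "\<And>x. \<bar>g x\<bar> \<le> \<bar>h x\<bar>" and h: "in_Linf_v v h"
  shows "in_Linf_v v g"
proof -
  obtain C where "\<And>x. \<bar>h x\<bar> / v x \<le> C"
    using h unfolding in_Linf_v_def bdd_above_def by auto
  then have "\<bar>g x\<bar> / v x \<le> C" for x
    using divide_right_mono[OF le v, of x] by (meson order_trans)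
  with g show ?thesis
    unfolding in_Linf_v_def bdd_above_def by auto
qed

lemma in_Linf_v_one:
  assumes "\<And>x. 1 \<le> v x"
  shows "in_Linf_v v (\<lambda>_. 1)"
proof -
  have "\<bar>1::real\<bar> / v x \<le> 1" for x
    using assms[of x] by simp
  then show ?thesis
    unfolding in_Linf_v_def bdd_above_def by auto
qed

lemma in_Linf_v_bounded:
  assumes v: "\<And>x. 1 \<le> v x" and g: "g \<in> borel_measurable borel" and le: "\<And>x. \<bar>g x\<bar> \<le> 1"
  shows "in_Linf_v v g"
proof (rule in_Linf_v_mono[OF _ g _ in_Linf_v_one[OF v]])
  show "0 \<le> v x" for x
    using v[of x] by simp
qed (use le in simp)

lemma norm_matrix_le_sum_abs:
  fixes M :: "real^'l^'d"
  shows "norm M \<le> (\<Sum>i\<in>UNIV. \<Sum>j\<in>UNIV. \<bar>M $ i $ j\<bar>)"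
proof -
  have "norm M \<le> (\<Sum>i\<in>UNIV. norm (M $ i))"
    unfolding norm_vec_def by (rule L2_set_le_sum) simp
  also have "\<dots> \<le> (\<Sum>i\<in>UNIV. \<Sum>j\<in>UNIV. \<bar>M $ i $ j\<bar>)"
    by (intro sum_mono norm_le_l1_cart)
  finally show ?thesis .
qed

lemma matrix_matrix_mult_nth_column: "(S ** G) $ i $ j = (S *v column j G) $ i"
  by (simp add: matrix_matrix_mult_def matrix_vector_mult_def column_def)

lemma vector_matrix_mult_nth: "(h v* G) $ j = column j G \<bullet> h"
  by (simp add: vector_matrix_mult_def inner_vec_def column_def mult.commute)

lemma norm_column_le: "norm (column j (G::real^'l^'d)) \<le> norm G"
  by (rule norm_le_componentwise_cart) (simp add: column_def component_le_norm_cart)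

definition trig_coord :: "bool \<Rightarrow> 'n \<Rightarrow> real^'n \<Rightarrow> real" where
  "trig_coord b i x = (if b then sin (x $ i) else cos (x $ i))"

definition trig_grad :: "bool \<Rightarrow> 'n \<Rightarrow> real^'n \<Rightarrow> real^'n" where
  "trig_grad b i x = (if b then cos (x $ i) else - sin (x $ i)) *\<^sub>R axis i 1"

lemma trig_coord_has_derivative:
  "(trig_coord b i has_derivative (\<lambda>h. trig_grad b i x \<bullet> h)) (at x)"
proof -
  have nth: "((\<lambda>x. x $ i) has_derivative (\<lambda>x. x $ i)) (at x)"
    by (rule bounded_linear_imp_has_derivative[OF bounded_linear_vec_nth])
  show ?thesis
    unfolding trig_coord_def[abs_def] trig_grad_def
    by (cases b) (auto simp: inner_axis' intro!: derivative_eq_intros nth)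
qed

lemma continuous_on_trig_grad: "continuous_on UNIV (trig_grad b i)"
  by (cases b) (simp_all add: trig_grad_def, (intro continuous_intros)+)

lemma continuous_on_trig_coord: "continuous_on UNIV (trig_coord b i)"
  by (cases b) (simp_all add: trig_coord_def, (intro continuous_intros)+)

lemma abs_cos_add_abs_sin_ge_1: "1 \<le> \<bar>cos (x::real)\<bar> + \<bar>sin x\<bar>"
proof -
  have "\<bar>sin x\<bar> * \<bar>sin x\<bar> \<le> \<bar>sin x\<bar>" "\<bar>cos x\<bar> * \<bar>cos x\<bar> \<le> \<bar>cos x\<bar>"
    using mult_right_mono[of "\<bar>sin x\<bar>" 1 "\<bar>sin x\<bar>"] mult_right_mono[of "\<bar>cos x\<bar>" 1 "\<bar>cos x\<bar>"]
    by (simp_all add: abs_sin_le_one abs_cos_le_one)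
  moreover have "sin x * sin x + cos x * cos x = 1"
    using sin_cos_squared_add[of x] by (simp add: power2_eq_square)
  ultimately show ?thesis
    by (simp add: abs_mult_self_eq)
qed

text \<open>The gradients of the bounded functions \<open>sin x\<^sub>i\<close> and \<open>cos x\<^sub>i\<close> together detect the
  \<open>i\<close>-th coordinate, because \<open>\<bar>cos\<bar> + \<bar>sin\<bar> \<ge> 1\<close>. This is how (A3), which only controls
  inner products with gradients, bounds whole matrices.\<close>

lemma abs_nth_le_trig_grad_inner:
  "\<bar>w $ i\<bar> \<le> \<bar>trig_grad True i x \<bullet> w\<bar> + \<bar>trig_grad False i x \<bullet> w\<bar>"
proof -
  have "\<bar>w $ i\<bar> \<le> (\<bar>cos (x $ i)\<bar> + \<bar>sin (x $ i)\<bar>) * \<bar>w $ i\<bar>"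
    using mult_right_mono[OF abs_cos_add_abs_sin_ge_1 abs_ge_zero] by simp
  then show ?thesis
    by (simp add: trig_grad_def inner_axis' abs_mult algebra_simps)
qed

lemma norm_matrix_mult_le_trig_grad_sum:
  fixes S :: "real^'d^'d" and G :: "real^'l^'d"
  shows "norm (S ** G) \<le> (\<Sum>i\<in>UNIV. \<Sum>j\<in>UNIV. \<Sum>b\<in>UNIV. \<bar>trig_grad b i x \<bullet> (S *v column j G)\<bar>)"
proof -
  have "norm (S ** G) \<le> (\<Sum>i\<in>UNIV. \<Sum>j\<in>UNIV. \<bar>(S ** G) $ i $ j\<bar>)"
    by (rule norm_matrix_le_sum_abs)
  also have "\<dots> \<le> (\<Sum>i\<in>UNIV. \<Sum>j\<in>UNIV. \<Sum>b\<in>UNIV. \<bar>trig_grad b i x \<bullet> (S *v column j G)\<bar>)"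
  proof (intro sum_mono)
    fix i j
    show "\<bar>(S ** G) $ i $ j\<bar> \<le> (\<Sum>b\<in>UNIV. \<bar>trig_grad b i x \<bullet> (S *v column j G)\<bar>)"
      using abs_nth_le_trig_grad_inner[of "S *v column j G" i x]
      by (simp add: matrix_matrix_mult_nth_column UNIV_bool)
  qed
  finally show ?thesis .
qed

lemma prodA_shift: "prodA (\<lambda>s. A (s + k)) t j = prodA A (t + k) j"
  by (induction j) (simp_all add: algebra_simps)

lemma prodA_Suc_right: "prodA A t (Suc k) = prodA A (t - 1) k ** A t"
proof (induction k arbitrary: t)
  case 0
  then show ?case
    by (simp add: matrix_mul_lid matrix_mul_rid)
next
  case (Suc k)
  have "prodA A t (Suc (Suc k)) = A (t - int (Suc k)) ** prodA A t (Suc k)"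
    by (simp only: prodA.simps(2))
  also have "\<dots> = A (t - int (Suc k)) ** (prodA A (t - 1) k ** A t)"
    by (simp only: Suc)
  also have "\<dots> = prodA A (t - 1) (Suc k) ** A t"
    by (simp add: matrix_mul_assoc algebra_simps)
  finally show ?case .
qed

lemma phi_shift: "phi \<alpha> (\<lambda>s. A (s + k)) G (\<lambda>s. X (s + k)) t = phi \<alpha> A G X (t + k)"
  unfolding phi_def phi_term_def by (simp add: prodA_shift algebra_simps)

text \<open>The sensitivity process read off a path \<open>y n = (X(n), N(n+1))\<close>.\<close>

primrec path_sens :: "(real^'d \<Rightarrow> 'm \<Rightarrow> real^'d^'d) \<Rightarrow> (nat \<Rightarrow> (real^'d) \<times> 'm) \<Rightarrow> nat \<Rightarrow> real^'d^'d"
  where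
    "path_sens Ga y 0 = mat 1"
  | "path_sens Ga y (Suc r) = transpose (Ga (fst (y r)) (snd (y r))) ** path_sens Ga y r"

lemma path_sens_chain:
  "path_sens Ga (\<lambda>n. (chain a x ns n, ns n)) k = sens Ga a x ns k"
  by (induction k) simp_all

lemma transpose_prodA_path_sens:
  "transpose (prodA (\<lambda>s. Ga (fst (\<omega> (s - 1))) (snd (\<omega> (s - 1)))) t k)
     = path_sens Ga (\<lambda>n. \<omega> (t - int k + int n)) k"
proof (induction k arbitrary: t)
  case 0
  then show ?case
    by (simp add: transpose_mat)
next
  case (Suc k)
  have "(\<lambda>n. \<omega> (t - 1 - int k + int n)) = (\<lambda>n. \<omega> (t - int (Suc k) + int n))"
    by (simp add: algebra_simps)
  with Suc[of "t - 1"] show ?case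
    by (simp only: prodA_Suc_right matrix_transpose_mul) (simp add: algebra_simps)
qed

section \<open>The stationary chain indexed by the integers\<close>

lemma chain_Suc':
  "chain a x ns (Suc n) = chain a (a x (ns 0)) (\<lambda>i. ns (Suc i)) n"
  by (induction n arbitrary: x ns) simp_all

locale invariant_chain =
  fixes a :: "real^'d \<Rightarrow> real^'m \<Rightarrow> real^'d" and \<mu> :: "(real^'m) measure"
    and \<pi> :: "(real^'d) measure"
  assumes noise_prob: "prob_space \<mu>" and noise_sets: "sets \<mu> = sets borel"
    and a_cont: "continuous_on UNIV (\<lambda>(x, n). a x n)"
    and pi_prob: "prob_space \<pi>" and pi_sets: "sets \<pi> = sets borel"
    and pi_inv: "invariant_for a \<mu> \<pi>"
begin

abbreviation "noise_seq \<equiv> \<Pi>\<^sub>M i\<in>(UNIV::nat set). \<mu>"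
abbreviation "\<Omega> \<equiv> \<pi> \<Otimes>\<^sub>M noise_seq"
abbreviation "path_space \<equiv> \<Pi>\<^sub>M i\<in>(UNIV::nat set). (borel :: ((real^'d) \<times> (real^'m)) measure)"

lemma space_noise[simp]: "space \<mu> = UNIV"
  using sets_eq_imp_space_eq[OF noise_sets] by simp

lemma space_pi[simp]: "space \<pi> = UNIV"
  using sets_eq_imp_space_eq[OF pi_sets] by simp

lemma space_noise_seq[simp]: "space noise_seq = UNIV"
  by (simp add: space_PiM)

lemma space_path_space[simp]: "space path_space = UNIV"
  by (simp add: space_PiM)

lemma sequence_space_noise: "sequence_space \<mu>"
  using noise_prob by (simp add: sequence_space_def product_prob_space_def
      product_prob_space_axioms_def product_sigma_finite_def prob_space_imp_sigma_finite)

sublocale noise_seq: prob_space noise_seq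
  using noise_prob by (intro prob_space_PiM) auto

sublocale pi: prob_space \<pi>
  by (rule pi_prob)

sublocale mu: prob_space \<mu>
  by (rule noise_prob)

lemma prob_space_Omega: "prob_space \<Omega>"
  using noise_seq.prob_space_axioms pi_prob by (simp add: prob_space_pair)

lemma emeasure_Omega_Times:
  assumes "A \<in> sets \<pi>" and "B \<in> sets noise_seq"
  shows "emeasure \<Omega> (A \<times> B) = emeasure \<pi> A * emeasure noise_seq B"
  using noise_seq.emeasure_pair_measure_Times[OF assms] .

lemma borel_measurable_a:
  assumes "f \<in> borel_measurable M" "g \<in> borel_measurable M"
  shows "(\<lambda>x. a (f x) (g x)) \<in> borel_measurable M"
  by (rule borel_measurable_continuous_on2[OF _ assms]) (use a_cont in \<open>simp add: case_prod_beta'\<close>)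

lemma measurable_Omega_fst[measurable]: "fst \<in> borel_measurable \<Omega>"
  using measurable_fst[of \<pi> noise_seq] measurable_cong_sets[OF refl pi_sets] by blast

lemma measurable_Omega_noise[measurable]: "(\<lambda>\<omega>. snd \<omega> n) \<in> borel_measurable \<Omega>"
proof -
  have "(\<lambda>ns. ns n) \<in> borel_measurable noise_seq"
    using measurable_component_singleton[of n UNIV "\<lambda>_. \<mu>"] measurable_cong_sets[OF refl noise_sets]
    by blast
  then show ?thesis
    by (rule measurable_compose[OF measurable_snd])
qed

lemma measurable_Omega_chain: "(\<lambda>\<omega>. chain a (fst \<omega>) (snd \<omega>) n) \<in> borel_measurable \<Omega>"
  by (induction n) (simp_all add: borel_measurable_a)

lemma measurable_path_component[measurable]:
  "(\<lambda>y. fst (y n)) \<in> borel_measurable path_space"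
  "(\<lambda>y. snd (y n)) \<in> borel_measurable path_space"
  by (simp_all add: measurable_compose[OF measurable_component_singleton] borel_prod[symmetric])

text \<open>The one-sided chain started in \<open>\<pi>\<close>, as a path \<open>n \<mapsto> (X(n), N(n+1))\<close>.\<close>

definition path :: "(real^'d) \<times> (nat \<Rightarrow> real^'m) \<Rightarrow> nat \<Rightarrow> (real^'d) \<times> (real^'m)" where
  "path \<omega> = (\<lambda>n. (chain a (fst \<omega>) (snd \<omega>) n, snd \<omega> n))"

lemma measurable_path: "path \<in> \<Omega> \<rightarrow>\<^sub>M path_space"
proof (rule measurable_PiM_single')
  fix n
  show "(\<lambda>\<omega>. path \<omega> n) \<in> borel_measurable \<Omega>"
    using measurable_Pair[OF measurable_Omega_chain measurable_Omega_noise, of n n]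
    by (simp add: path_def borel_prod)
qed simp

definition "path_law = distr \<Omega> path_space path"

lemma sets_path_law[simp]: "sets path_law = sets path_space"
  by (simp add: path_law_def)

lemma space_path_law[simp]: "space path_law = UNIV"
  by (simp add: path_law_def space_PiM)

lemma prob_space_path_law: "prob_space path_law"
  unfolding path_law_def by (rule prob_space.prob_space_distr[OF prob_space_Omega measurable_path])

definition step :: "(real^'d) \<times> (nat \<Rightarrow> real^'m) \<Rightarrow> (real^'d) \<times> (nat \<Rightarrow> real^'m)" where
  "step \<omega> = (a (fst \<omega>) (snd \<omega> 0), \<lambda>i. snd \<omega> (Suc i))"

lemma path_step: "path (step \<omega>) = (\<lambda>n. path \<omega> (Suc n))"
  unfolding path_def step_def by (rule ext) (simp only: chain_Suc' fst_conv snd_conv)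

lemma measurable_noise_seq_tail: "(\<lambda>ns i. ns (Suc i)) \<in> noise_seq \<rightarrow>\<^sub>M noise_seq"
  by (rule measurable_PiM_single') (auto intro: measurable_component_singleton)

lemma measurable_step: "step \<in> \<Omega> \<rightarrow>\<^sub>M \<Omega>"
proof -
  have "(\<lambda>\<omega>. a (fst \<omega>) (snd \<omega> 0)) \<in> \<Omega> \<rightarrow>\<^sub>M \<pi>"
    using borel_measurable_a[OF measurable_Omega_fst measurable_Omega_noise]
      measurable_cong_sets[OF refl pi_sets] by blast
  moreover have "(\<lambda>\<omega>. (\<lambda>i. snd \<omega> (Suc i))) \<in> \<Omega> \<rightarrow>\<^sub>M noise_seq"
    using measurable_compose[OF measurable_snd[of \<pi> noise_seq] measurable_noise_seq_tail] by simp
  ultimately show ?thesis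
    unfolding step_def by (rule measurable_Pair)
qed

lemma emeasure_noise_seq_head_tail:
  assumes C: "C \<in> sets \<mu>" and B: "B \<in> sets noise_seq"
  shows "emeasure noise_seq {ns. ns 0 \<in> C \<and> (\<lambda>i. ns (Suc i)) \<in> B} = emeasure \<mu> C * emeasure noise_seq B"
proof -
  let ?cons = "\<lambda>(s, ns). case_nat s ns :: nat \<Rightarrow> real^'m"
  let ?E = "{ns. ns 0 \<in> C \<and> (\<lambda>i. ns (Suc i)) \<in> B}"
  have cons: "?cons \<in> \<mu> \<Otimes>\<^sub>M noise_seq \<rightarrow>\<^sub>M noise_seq"
    using measurable_case_nat'[OF measurable_fst measurable_snd] by (simp add: case_prod_beta')
  have "(\<lambda>ns. (ns 0, (\<lambda>i. ns (Suc i)))) \<in> noise_seq \<rightarrow>\<^sub>M \<mu> \<Otimes>\<^sub>M noise_seq"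
    by (intro measurable_Pair measurable_noise_seq_tail measurable_component_singleton) simp
  from measurable_sets[OF this pair_measureI[OF C B]] have E: "?E \<in> sets noise_seq"
    by (simp add: vimage_def)
  have "emeasure noise_seq ?E = emeasure (distr (\<mu> \<Otimes>\<^sub>M noise_seq) noise_seq ?cons) ?E"
    by (simp only: sequence_space.PiM_iter[OF sequence_space_noise])
  also have "\<dots> = emeasure (\<mu> \<Otimes>\<^sub>M noise_seq) (?cons -` ?E \<inter> space (\<mu> \<Otimes>\<^sub>M noise_seq))"
    by (rule emeasure_distr[OF cons E])
  also have "?cons -` ?E \<inter> space (\<mu> \<Otimes>\<^sub>M noise_seq) = C \<times> B"
    by (auto simp: space_pair_measure)
  finally show ?thesis
    using noise_seq.emeasure_pair_measure_Times[OF C B] by simp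
qed

lemma sets_transition_preimage:
  assumes "A \<in> sets \<pi>"
  shows "{n. a x n \<in> A} \<in> sets \<mu>"
proof -
  have "(\<lambda>n. a x n) \<in> borel_measurable borel"
    by (rule borel_measurable_a) simp_all
  from measurable_sets[OF this, of A] show ?thesis
    using assms by (simp add: vimage_def pi_sets noise_sets)
qed

lemma measurable_transition:
  assumes "A \<in> sets \<pi>"
  shows "(\<lambda>x. emeasure \<mu> {n. a x n \<in> A}) \<in> borel_measurable \<pi>"
proof -
  have "(\<lambda>p. a (fst p) (snd p)) \<in> borel_measurable (\<pi> \<Otimes>\<^sub>M \<mu>)"
    by (rule borel_measurable_a)
       (simp_all add: measurable_fst[of \<pi> \<mu>, unfolded measurable_cong_sets[OF refl pi_sets]]
                      measurable_snd[of \<pi> \<mu>, unfolded measurable_cong_sets[OF refl noise_sets]])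
  from measurable_sets[OF this, of A] assms pi_sets
  have "{p. a (fst p) (snd p) \<in> A} \<in> sets (\<pi> \<Otimes>\<^sub>M \<mu>)"
    by (simp add: vimage_def space_pair_measure)
  from mu.measurable_emeasure_Pair[OF this] show ?thesis
    by (simp add: vimage_def)
qed

lemma distr_step: "distr \<Omega> \<Omega> step = \<Omega>"
proof -
  have "\<Omega> = distr \<Omega> \<Omega> step"
  proof (rule pair_measure_eqI)
    fix A B assume A: "A \<in> sets \<pi>" and B: "B \<in> sets noise_seq"
    have "emeasure (distr \<Omega> \<Omega> step) (A \<times> B) = emeasure \<Omega> (step -` (A \<times> B) \<inter> space \<Omega>)"
      using A B by (intro emeasure_distr[OF measurable_step]) simp
    also have "\<dots> = (\<integral>\<^sup>+x. emeasure noise_seq (Pair x -` (step -` (A \<times> B) \<inter> space \<Omega>)) \<partial>\<pi>)"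
      using measurable_sets[OF measurable_step, of "A \<times> B"] A B
      by (intro noise_seq.emeasure_pair_measure_alt) simp
    also have "\<dots> = (\<integral>\<^sup>+x. emeasure \<mu> {n. a x n \<in> A} * emeasure noise_seq B \<partial>\<pi>)"
    proof (rule nn_integral_cong)
      fix x
      have "Pair x -` (step -` (A \<times> B) \<inter> space \<Omega>) = {ns. ns 0 \<in> {n. a x n \<in> A} \<and> (\<lambda>i. ns (Suc i)) \<in> B}"
        by (auto simp: step_def space_pair_measure)
      then show "emeasure noise_seq (Pair x -` (step -` (A \<times> B) \<inter> space \<Omega>))
          = emeasure \<mu> {n. a x n \<in> A} * emeasure noise_seq B"
        using emeasure_noise_seq_head_tail[OF sets_transition_preimage[OF A] B] by simp
    qed
    also have "\<dots> = (\<integral>\<^sup>+x. emeasure \<mu> {n. a x n \<in> A} \<partial>\<pi>) * emeasure noise_seq B"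
      by (rule nn_integral_multc[OF measurable_transition[OF A]])
    also have "(\<integral>\<^sup>+x. emeasure \<mu> {n. a x n \<in> A} \<partial>\<pi>) = emeasure \<pi> A"
      using pi_inv A pi_sets unfolding invariant_for_def by simp
    finally show "emeasure \<pi> A * emeasure noise_seq B = emeasure (distr \<Omega> \<Omega> step) (A \<times> B)"
      by simp
  qed (simp_all add: pi.sigma_finite_measure_axioms noise_seq.sigma_finite_measure_axioms)
  then show ?thesis by simp
qed

lemma measurable_path_shift: "(\<lambda>y n. y (n + k)) \<in> path_space \<rightarrow>\<^sub>M path_space"
  by (rule measurable_PiM_single') (auto intro: measurable_component_singleton)

lemma distr_path_law_Suc: "distr path_law path_space (\<lambda>y n. y (Suc n)) = path_law"
proof -
  have "distr path_law path_space (\<lambda>y n. y (Suc n)) = distr \<Omega> path_space ((\<lambda>y n. y (Suc n)) \<circ> path)"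
    unfolding path_law_def using measurable_path_shift[of 1] measurable_path
    by (intro distr_distr) simp_all
  also have "(\<lambda>y n. y (Suc n)) \<circ> path = path \<circ> step"
    by (auto simp: path_step)
  also have "distr \<Omega> path_space (path \<circ> step) = distr (distr \<Omega> \<Omega> step) path_space path"
    by (rule distr_distr[OF measurable_path measurable_step, symmetric])
  finally show ?thesis
    by (simp only: distr_step path_law_def)
qed

lemma distr_path_law_shift: "distr path_law path_space (\<lambda>y n. y (n + k)) = path_law"
proof (induction k)
  case 0
  show ?case by (simp add: distr_id2)
next
  case (Suc k)
  have suc: "(\<lambda>y n. y (Suc n)) \<in> path_space \<rightarrow>\<^sub>M path_space"
    by (rule measurable_PiM_single') (auto intro: measurable_component_singleton)
  have shift: "(\<lambda>y n. y (n + k)) \<in> path_law \<rightarrow>\<^sub>M path_space"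
    using measurable_path_shift[of k] by (simp add: measurable_cong_sets[OF sets_path_law refl])
  have eq: "(\<lambda>y n. y (n + Suc k)) = (\<lambda>y n. y (Suc n)) \<circ> (\<lambda>y n. y (n + k))"
    by (auto simp: fun_eq_iff)
  have "distr path_law path_space (\<lambda>y n. y (n + Suc k))
      = distr (distr path_law path_space (\<lambda>y n. y (n + k))) path_space (\<lambda>y n. y (Suc n))"
    unfolding eq by (rule distr_distr[OF suc shift, symmetric])
  then show ?case
    by (simp add: Suc distr_path_law_Suc)
qed

text \<open>Finite-dimensional distributions of the two-sided stationary chain: a finite window of
  integer times is read off the one-sided path started at its smallest time.\<close>

definition fin_law :: "int set \<Rightarrow> (int \<Rightarrow> (real^'d) \<times> (real^'m)) measure" where
  "fin_law J = distr path_law (\<Pi>\<^sub>M t\<in>J. borel) (\<lambda>y. \<lambda>t\<in>J. y (nat (t - Min J)))"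

lemma measurable_restrict_from:
  "(\<lambda>y. \<lambda>t\<in>J. y (nat (t - b))) \<in> path_law \<rightarrow>\<^sub>M (\<Pi>\<^sub>M t\<in>J. borel)"
  by (subst measurable_cong_sets[OF sets_path_law refl])
     (intro measurable_restrict measurable_component_singleton, simp)

lemma fin_law_from_lower_bound:
  assumes J: "finite J" and b: "\<And>t. t \<in> J \<Longrightarrow> b \<le> t"
  shows "fin_law J = distr path_law (\<Pi>\<^sub>M t\<in>J. borel) (\<lambda>y. \<lambda>t\<in>J. y (nat (t - b)))"
proof (cases "J = {}")
  case True
  then show ?thesis
    by (simp add: fin_law_def restrict_def)
next
  case False
  define d where "d = nat (Min J - b)"
  have "b \<le> Min J"
    using b J False by simp
  then have eq: "(\<lambda>y. \<lambda>t\<in>J. y (nat (t - b))) = (\<lambda>y. \<lambda>t\<in>J. y (nat (t - Min J))) \<circ> (\<lambda>y n. y (n + d))"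
    using J by (auto simp: fun_eq_iff d_def restrict_def nat_add_distrib[symmetric])
  have shift: "(\<lambda>y n. y (n + d)) \<in> path_law \<rightarrow>\<^sub>M path_space"
    using measurable_path_shift[of d] by (simp add: measurable_cong_sets[OF sets_path_law refl])
  have restr: "(\<lambda>y. \<lambda>t\<in>J. y (nat (t - Min J))) \<in> path_space \<rightarrow>\<^sub>M (\<Pi>\<^sub>M t\<in>J. borel)"
    using measurable_restrict_from by (simp add: measurable_cong_sets[OF sets_path_law refl])
  show ?thesis
    unfolding eq distr_distr[OF restr shift, symmetric]
    by (simp add: distr_path_law_shift fin_law_def)
qed

lemma projective_fin_law: "projective_family (UNIV::int set) fin_law (\<lambda>_. borel)"
proof (rule projective_family.intro)
  fix J H :: "int set" assume JH: "J \<subseteq> H" "finite H" "H \<subseteq> UNIV"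
  define b where "b = (if H = {} then 0 else Min H)"
  have bH: "\<And>t. t \<in> H \<Longrightarrow> b \<le> t"
    using JH by (auto simp: b_def)
  have H: "fin_law H = distr path_law (\<Pi>\<^sub>M t\<in>H. borel) (\<lambda>y. \<lambda>t\<in>H. y (nat (t - b)))"
    by (rule fin_law_from_lower_bound[OF JH(2) bH])
  have "distr (fin_law H) (\<Pi>\<^sub>M t\<in>J. borel) (\<lambda>f. restrict f J)
      = distr path_law (\<Pi>\<^sub>M t\<in>J. borel) ((\<lambda>f. restrict f J) \<circ> (\<lambda>y. \<lambda>t\<in>H. y (nat (t - b))))"
    unfolding H by (rule distr_distr[OF measurable_restrict_subset[OF JH(1)] measurable_restrict_from])
  also have "(\<lambda>f. restrict f J) \<circ> (\<lambda>y. \<lambda>t\<in>H. y (nat (t - b))) = (\<lambda>y. \<lambda>t\<in>J. y (nat (t - b)))"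
    using JH(1) by (auto simp: fun_eq_iff restrict_def)
  also have "distr path_law (\<Pi>\<^sub>M t\<in>J. borel) \<dots> = fin_law J"
    using JH bH by (intro fin_law_from_lower_bound[symmetric]) (auto intro: finite_subset)
  finally show "fin_law J = distr (fin_law H) (\<Pi>\<^sub>M t\<in>J. borel) (\<lambda>f. restrict f J)"
    by (rule sym)
next
  show "prob_space (fin_law J)" for J :: "int set"
    unfolding fin_law_def by (rule prob_space.prob_space_distr[OF prob_space_path_law measurable_restrict_from])
qed

sublocale two_sided: polish_projective "UNIV::int set" fin_law
  unfolding polish_projective_def by (rule projective_fin_law)

text \<open>The stationary two-sided chain: coordinate \<open>t\<close> is the pair \<open>(X(t), N(t+1))\<close>.\<close>

abbreviation "law \<equiv> two_sided.lim"

abbreviation "bipath_space \<equiv> \<Pi>\<^sub>M t\<in>(UNIV::int set). (borel :: ((real^'d) \<times> (real^'m)) measure)"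

lemma space_law[simp]: "space law = UNIV"
  by (simp add: space_PiM)

lemma measurable_law_iff: "f \<in> law \<rightarrow>\<^sub>M N \<longleftrightarrow> f \<in> bipath_space \<rightarrow>\<^sub>M N"
  by (simp add: measurable_cong_sets[OF two_sided.sets_lim refl])

definition window :: "int \<Rightarrow> (int \<Rightarrow> 'a) \<Rightarrow> nat \<Rightarrow> 'a" where
  "window s \<omega> = (\<lambda>n. \<omega> (s + int n))"

lemma measurable_window: "window s \<in> law \<rightarrow>\<^sub>M path_space"
  unfolding measurable_law_iff window_def
  by (rule measurable_PiM_single') (auto intro: measurable_component_singleton)

lemma emeasure_law_cylinder:
  assumes J: "finite J" and A: "\<And>i. i \<in> J \<Longrightarrow> A i \<in> sets borel" and b: "\<And>t. t \<in> J \<Longrightarrow> b \<le> t"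
  shows "emeasure law (prod_emb UNIV (\<lambda>_. borel) J (PiE J A))
       = emeasure path_law {y. \<forall>t\<in>J. y (nat (t - b)) \<in> A t}"
proof -
  have A': "PiE J A \<in> sets (\<Pi>\<^sub>M t\<in>J. borel)"
    using J A by (intro sets_PiM_I_finite) auto
  have "emeasure law (prod_emb UNIV (\<lambda>_. borel) J (PiE J A)) = emeasure (fin_law J) (PiE J A)"
    by (rule two_sided.emeasure_lim_emb[OF _ J A']) simp
  also have "fin_law J = distr path_law (\<Pi>\<^sub>M t\<in>J. borel) (\<lambda>y. \<lambda>t\<in>J. y (nat (t - b)))"
    by (rule fin_law_from_lower_bound[OF J b])
  also have "emeasure \<dots> (PiE J A) = emeasure path_law ((\<lambda>y. \<lambda>t\<in>J. y (nat (t - b))) -` PiE J A \<inter> space path_law)"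
    by (rule emeasure_distr[OF measurable_restrict_from A'])
  also have "(\<lambda>y. \<lambda>t\<in>J. y (nat (t - b))) -` PiE J A \<inter> space path_law = {y. \<forall>t\<in>J. y (nat (t - b)) \<in> A t}"
    by (auto simp: PiE_iff)
  finally show ?thesis .
qed

lemma distr_window: "distr law path_space (window s) = path_law"
proof (rule measure_eqI_PiM_infinite)
  show "finite_measure (distr law path_space (window s))"
    by (rule prob_space.finite_measure[OF prob_space.prob_space_distr[OF two_sided.P.prob_space_axioms measurable_window]])
next
  fix J :: "nat set" and A :: "nat \<Rightarrow> ((real^'d) \<times> (real^'m)) set"
  assume J: "finite J" "J \<subseteq> UNIV" and A: "\<And>i. i \<in> J \<Longrightarrow> A i \<in> sets borel"
  define J' where "J' = (\<lambda>n. s + int n) ` J"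
  define A' where "A' = (\<lambda>t. A (nat (t - s)))"
  have cyl: "prod_emb UNIV (\<lambda>_. borel) J (PiE J A) \<in> sets path_space"
    using J A by (intro sets_PiM_I) auto
  have "emeasure (distr law path_space (window s)) (prod_emb UNIV (\<lambda>_. borel) J (PiE J A))
      = emeasure law (window s -` prod_emb UNIV (\<lambda>_. borel) J (PiE J A) \<inter> space law)"
    by (rule emeasure_distr[OF measurable_window cyl])
  also have "window s -` prod_emb UNIV (\<lambda>_. borel) J (PiE J A) \<inter> space law
      = prod_emb UNIV (\<lambda>_. borel) J' (PiE J' A')"
    by (auto simp: prod_emb_def PiE_iff J'_def A'_def window_def space_PiM)
  also have "emeasure law \<dots> = emeasure path_law {y. \<forall>t\<in>J'. y (nat (t - s)) \<in> A' t}"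
    by (rule emeasure_law_cylinder) (use J A in \<open>auto simp: J'_def A'_def\<close>)
  also have "{y. \<forall>t\<in>J'. y (nat (t - s)) \<in> A' t} = prod_emb UNIV (\<lambda>_. borel) J (PiE J A)"
    by (auto simp: prod_emb_def PiE_iff J'_def A'_def space_PiM)
  finally show "emeasure (distr law path_space (window s)) (prod_emb UNIV (\<lambda>_. borel) J (PiE J A))
      = emeasure path_law (prod_emb UNIV (\<lambda>_. borel) J (PiE J A))" .
qed simp_all

lemma emeasure_window:
  assumes "C \<in> sets path_space"
  shows "emeasure law {\<omega>. window s \<omega> \<in> C} = emeasure \<Omega> (path -` C \<inter> space \<Omega>)"
proof -
  have "emeasure law {\<omega>. window s \<omega> \<in> C} = emeasure (distr law path_space (window s)) C"
    by (subst emeasure_distr[OF measurable_window assms]) (simp add: vimage_def space_PiM)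
  then show ?thesis
    unfolding distr_window path_law_def by (simp add: emeasure_distr[OF measurable_path assms])
qed

lemma measure_window:
  assumes "C \<in> sets path_space"
  shows "measure law {\<omega>. window s \<omega> \<in> C} = measure \<Omega> (path -` C \<inter> space \<Omega>)"
  using emeasure_window[OF assms] by (simp add: measure_def)

lemma nn_integral_window:
  assumes "f \<in> borel_measurable path_space"
  shows "(\<integral>\<^sup>+\<omega>. f (window s \<omega>) \<partial>law) = (\<integral>\<^sup>+z. f (path z) \<partial>\<Omega>)"
proof -
  have "(\<integral>\<^sup>+\<omega>. f (window s \<omega>) \<partial>law) = (\<integral>\<^sup>+y. f y \<partial>path_law)"
    using nn_integral_distr[OF measurable_window, of f s] assms
    by (simp add: distr_window measurable_cong_sets[OF sets_path_law refl])
  also have "\<dots> = (\<integral>\<^sup>+z. f (path z) \<partial>\<Omega>)"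
    unfolding path_law_def using nn_integral_distr[OF measurable_path, of f] assms by simp
  finally show ?thesis .
qed

lemma AE_window:
  assumes "AE z in \<Omega>. P (path z)" and "{y \<in> space path_space. P y} \<in> sets path_space"
  shows "AE \<omega> in law. P (window s \<omega>)"
proof -
  have "AE y in distr law path_space (window s). P y"
    unfolding distr_window path_law_def using assms by (simp add: AE_distr_iff[OF measurable_path])
  from AE_distrD[OF measurable_window this] show ?thesis .
qed

lemma emeasure_Omega_UNIV_Times:
  assumes "B \<in> sets noise_seq"
  shows "emeasure \<Omega> (UNIV \<times> B) = emeasure noise_seq B"
  using emeasure_Omega_Times[OF sets.top assms] pi.emeasure_space_1 by simp

lemma emeasure_Omega_Times_UNIV:
  assumes "A \<in> sets \<pi>"
  shows "emeasure \<Omega> (A \<times> UNIV) = emeasure \<pi> A"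
  using emeasure_Omega_Times[OF assms sets.top] noise_seq.emeasure_space_1 by simp

lemma distr_Omega_snd: "distr \<Omega> noise_seq snd = noise_seq"
proof (rule measure_eqI)
  fix B assume "B \<in> sets (distr \<Omega> noise_seq snd)"
  then have B: "B \<in> sets noise_seq" by simp
  have "snd -` B \<inter> space \<Omega> = UNIV \<times> B"
    by (auto simp: space_pair_measure)
  then show "emeasure (distr \<Omega> noise_seq snd) B = emeasure noise_seq B"
    by (simp add: emeasure_distr[OF measurable_snd B] emeasure_Omega_UNIV_Times[OF B])
qed simp

lemma emeasure_noise_seq_shifted_cylinder:
  assumes J: "finite J" and s: "\<And>j. j \<in> J \<Longrightarrow> s < j" and A: "\<And>j. j \<in> J \<Longrightarrow> A j \<in> sets \<mu>"
  shows "emeasure noise_seq {ns. \<forall>j\<in>J. ns (nat (j - 1 - s)) \<in> A j} = (\<Prod>j\<in>J. emeasure \<mu> (A j))"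
proof -
  define g where "g j = nat (j - 1 - s)" for j
  have g_inv: "s + 1 + int (g j) = j" if "j \<in> J" for j
    using s[OF that] by (simp add: g_def)
  then have inj: "inj_on g J"
    by (metis inj_onI)
  have "{ns. \<forall>j\<in>J. ns (g j) \<in> A j} = prod_emb UNIV (\<lambda>_. \<mu>) (g ` J) (PiE (g ` J) (\<lambda>n. A (s + 1 + int n)))"
    using g_inv by (auto simp: prod_emb_def PiE_iff space_PiM)
  moreover have "emeasure noise_seq (prod_emb UNIV (\<lambda>_. \<mu>) (g ` J) (PiE (g ` J) (\<lambda>n. A (s + 1 + int n))))
      = (\<Prod>n\<in>g ` J. emeasure \<mu> (A (s + 1 + int n)))"
    using J A g_inv by (intro emeasure_PiM_emb[OF noise_prob]) auto
  moreover have "\<dots> = (\<Prod>j\<in>J. emeasure \<mu> (A j))"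
    by (simp add: prod.reindex[OF inj] g_inv)
  ultimately show ?thesis
    by (simp add: g_def)
qed

definition state :: "int \<Rightarrow> (int \<Rightarrow> (real^'d) \<times> (real^'m)) \<Rightarrow> real^'d" where
  "state t \<omega> = fst (\<omega> t)"

definition noise :: "int \<Rightarrow> (int \<Rightarrow> (real^'d) \<times> (real^'m)) \<Rightarrow> real^'m" where
  "noise t \<omega> = snd (\<omega> (t - 1))"

lemma state_window: "state t \<omega> = fst (window t \<omega> 0)"
  by (simp add: state_def window_def)

lemma noise_window: "noise t \<omega> = snd (window (t - 1) \<omega> 0)"
  by (simp add: noise_def window_def)

lemma measurable_state: "state t \<in> borel_measurable law"
  unfolding measurable_law_iff state_def
  by (simp add: measurable_compose[OF measurable_component_singleton] borel_prod[symmetric])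

lemma measurable_noise: "noise t \<in> borel_measurable law"
  unfolding measurable_law_iff noise_def
  by (simp add: measurable_compose[OF measurable_component_singleton] borel_prod[symmetric])

lemma distr_law_window:
  assumes g: "g \<in> path_space \<rightarrow>\<^sub>M N"
  shows "distr law N (\<lambda>\<omega>. g (window s \<omega>)) = distr \<Omega> N (\<lambda>z. g (path z))"
proof -
  have "distr law N (\<lambda>\<omega>. g (window s \<omega>)) = distr (distr law path_space (window s)) N g"
    using distr_distr[OF g measurable_window] by (simp add: comp_def)
  also have "\<dots> = distr \<Omega> N (\<lambda>z. g (path z))"
    unfolding distr_window path_law_def using distr_distr[OF g measurable_path] by (simp add: comp_def)
  finally show ?thesis .
qed

lemma distr_state: "distr law borel (state t) = \<pi>"
proof -
  have "distr law borel (state t) = distr \<Omega> borel fst"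
    unfolding state_window
    by (subst distr_law_window) (simp_all add: path_def)
  also have "\<dots> = distr \<Omega> \<pi> fst"
    by (rule distr_cong) (simp_all add: pi_sets)
  also have "\<dots> = \<pi>"
    by (rule noise_seq.distr_pair_fst)
  finally show ?thesis .
qed

lemma distr_noise: "distr law borel (noise t) = \<mu>"
proof -
  have head: "(\<lambda>ns. ns 0) \<in> noise_seq \<rightarrow>\<^sub>M borel"
    using measurable_component_singleton[of 0 UNIV "\<lambda>_. \<mu>"]
    by (simp add: measurable_cong_sets[OF refl noise_sets])
  have "distr law borel (noise t) = distr \<Omega> borel (\<lambda>z. snd z 0)"
    unfolding noise_window by (subst distr_law_window) (simp_all add: path_def)
  also have "\<dots> = distr (distr \<Omega> noise_seq snd) borel (\<lambda>ns. ns 0)"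
    using distr_distr[OF head measurable_snd[of \<pi> noise_seq]] by (simp add: comp_def)
  also have "\<dots> = distr noise_seq \<mu> (\<lambda>ns. ns 0)"
    unfolding distr_Omega_snd by (rule distr_cong) (simp_all add: noise_sets)
  also have "\<dots> = \<mu>"
    using distr_PiM_component[of UNIV "\<lambda>_. \<mu>" 0] noise_prob by simp
  finally show ?thesis .
qed

lemma AE_state_recursion: "AE \<omega> in law. \<forall>t. state (t + 1) \<omega> = a (state t \<omega>) (noise (t + 1) \<omega>)"
proof (rule AE_all_countable[THEN iffD2], rule allI)
  fix t :: int
  have "{y \<in> space path_space. fst (y 1) = a (fst (y 0)) (snd (y 0))} \<in> sets path_space"
    by (intro measurable_equality_set borel_measurable_a measurable_path_component)
  then have "AE \<omega> in law. fst (window t \<omega> 1) = a (fst (window t \<omega> 0)) (snd (window t \<omega> 0))"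
    by (rule AE_window[rotated]) (simp add: path_def)
  then show "AE \<omega> in law. state (t + 1) \<omega> = a (state t \<omega>) (noise (t + 1) \<omega>)"
    by (simp add: state_def noise_def window_def)
qed

lemma indep_state_future_noise:
  assumes A: "A \<in> sets borel" and B: "B \<in> sets (\<Pi>\<^sub>M s\<in>(UNIV::nat set). (borel :: (real^'m) measure))"
  shows "measure law {\<omega>\<in>space law. state t \<omega> \<in> A \<and> (\<lambda>s. noise (t + 1 + int s) \<omega>) \<in> B}
       = measure law {\<omega>\<in>space law. state t \<omega> \<in> A} *
         measure law {\<omega>\<in>space law. (\<lambda>s. noise (t + 1 + int s) \<omega>) \<in> B}"
proof -
  have A': "A \<in> sets \<pi>"
    using A pi_sets by simp
  have B': "B \<in> sets noise_seq"
    using B sets_PiM_cong[OF refl, of UNIV "\<lambda>_. \<mu>" "\<lambda>_. borel"] noise_sets by simp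
  define CA where "CA = {y :: nat \<Rightarrow> (real^'d) \<times> (real^'m). fst (y 0) \<in> A}"
  define CB where "CB = {y :: nat \<Rightarrow> (real^'d) \<times> (real^'m). (\<lambda>n. snd (y n)) \<in> B}"
  have "(\<lambda>y. fst (y 0)) \<in> borel_measurable path_space"
    by (rule measurable_path_component)
  from measurable_sets[OF this A] have CA: "CA \<in> sets path_space"
    by (simp add: CA_def vimage_def)
  have "(\<lambda>y n. snd (y n)) \<in> path_space \<rightarrow>\<^sub>M (\<Pi>\<^sub>M s\<in>(UNIV::nat set). borel)"
    by (rule measurable_PiM_single') (simp_all add: measurable_path_component)
  from measurable_sets[OF this B] have CB: "CB \<in> sets path_space"
    by (simp add: CB_def vimage_def)
  have "measure law {\<omega>. window t \<omega> \<in> CA \<inter> CB} = measure \<Omega> (A \<times> B)"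
    by (subst measure_window[OF sets.Int[OF CA CB]]) (auto simp: CA_def CB_def path_def space_pair_measure intro: arg_cong[where f="measure _"])
  moreover have "measure law {\<omega>. window t \<omega> \<in> CA} = measure \<pi> A"
  proof -
    have "path -` CA \<inter> space \<Omega> = A \<times> UNIV"
      by (auto simp: CA_def path_def space_pair_measure)
    then show ?thesis
      by (simp add: measure_def emeasure_window[OF CA] emeasure_Omega_Times_UNIV[OF A'])
  qed
  moreover have "measure law {\<omega>. window t \<omega> \<in> CB} = measure noise_seq B"
  proof -
    have "path -` CB \<inter> space \<Omega> = UNIV \<times> B"
      by (auto simp: CB_def path_def space_pair_measure)
    then show ?thesis
      by (simp add: measure_def emeasure_window[OF CB] emeasure_Omega_UNIV_Times[OF B'])
  qed
  moreover have "measure \<Omega> (A \<times> B) = measure \<pi> A * measure noise_seq B"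
    using emeasure_Omega_Times[OF A' B'] by (simp add: measure_def enn2real_mult)
  moreover have "noise (t + 1 + int n) \<omega> = snd (window t \<omega> n)" for n \<omega>
    by (simp add: noise_def window_def algebra_simps)
  ultimately show ?thesis
    by (simp add: state_window CA_def CB_def space_PiM)
qed

lemma distr_law_shift: "distr law bipath_space (\<lambda>\<omega> t. \<omega> (t + k)) = law"
proof (rule measure_eqI_PiM_infinite)
  have shift: "(\<lambda>\<omega> t. \<omega> (t + k)) \<in> law \<rightarrow>\<^sub>M bipath_space"
    unfolding measurable_law_iff
    by (rule measurable_PiM_single') (auto intro: measurable_component_singleton)
  then show "finite_measure (distr law bipath_space (\<lambda>\<omega> t. \<omega> (t + k)))"
    by (intro prob_space.finite_measure prob_space.prob_space_distr two_sided.P.prob_space_axioms)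
  fix J :: "int set" and A :: "int \<Rightarrow> ((real^'d) \<times> (real^'m)) set"
  assume J: "finite J" "J \<subseteq> UNIV" and A: "\<And>i. i \<in> J \<Longrightarrow> A i \<in> sets borel"
  define b where "b = (if J = {} then 0 else Min J)"
  have b: "\<And>t. t \<in> J \<Longrightarrow> b \<le> t"
    using J by (auto simp: b_def)
  define J' where "J' = (\<lambda>t. t + k) ` J"
  define A' where "A' = (\<lambda>t. A (t - k))"
  have cyl: "prod_emb UNIV (\<lambda>_. borel) J (PiE J A) \<in> sets bipath_space"
    using J A by (intro sets_PiM_I) auto
  have "emeasure (distr law bipath_space (\<lambda>\<omega> t. \<omega> (t + k))) (prod_emb UNIV (\<lambda>_. borel) J (PiE J A))
      = emeasure law (prod_emb UNIV (\<lambda>_. borel) J' (PiE J' A'))"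
    by (subst emeasure_distr[OF shift cyl])
       (auto simp: prod_emb_def PiE_iff J'_def A'_def space_PiM intro!: arg_cong[where f="emeasure law"])
  also have "\<dots> = emeasure path_law {y. \<forall>t\<in>J'. y (nat (t - (b + k))) \<in> A' t}"
    by (rule emeasure_law_cylinder) (use J A b in \<open>auto simp: J'_def A'_def\<close>)
  also have "{y. \<forall>t\<in>J'. y (nat (t - (b + k))) \<in> A' t} = {y. \<forall>t\<in>J. y (nat (t - b)) \<in> A t}"
    by (auto simp: J'_def A'_def)
  also have "emeasure path_law \<dots> = emeasure law (prod_emb UNIV (\<lambda>_. borel) J (PiE J A))"
    by (rule emeasure_law_cylinder[symmetric, OF J(1) A b])
  finally show "emeasure (distr law bipath_space (\<lambda>\<omega> t. \<omega> (t + k))) (prod_emb UNIV (\<lambda>_. borel) J (PiE J A))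
      = emeasure law (prod_emb UNIV (\<lambda>_. borel) J (PiE J A))" .
qed simp_all

lemma emeasure_noise_cylinder:
  assumes J: "finite J" and A: "\<And>j. j \<in> J \<Longrightarrow> A j \<in> sets \<mu>"
  shows "emeasure law {\<omega>. \<forall>j\<in>J. noise j \<omega> \<in> A j} = (\<Prod>j\<in>J. emeasure \<mu> (A j))"
proof -
  define s where "s = (if J = {} then 0 else Min J - 1)"
  have s: "\<And>j. j \<in> J \<Longrightarrow> s < j"
    using Min_le[OF J] by (fastforce simp: s_def)
  define C where "C = {y :: nat \<Rightarrow> (real^'d) \<times> (real^'m). \<forall>j\<in>J. snd (y (nat (j - 1 - s))) \<in> A j}"
  define E where "E = {ns. \<forall>j\<in>J. ns (nat (j - 1 - s)) \<in> A j}"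
  have "{y \<in> space path_space. snd (y (nat (j - 1 - s))) \<in> A j} \<in> sets path_space" if "j \<in> J" for j
    using measurable_sets[OF measurable_path_component(2), of "A j"] A[OF that] noise_sets
    by (simp add: vimage_def)
  from sets.sets_Collect_finite_All[OF this J] have C: "C \<in> sets path_space"
    by (simp add: C_def)
  have "{ns \<in> space noise_seq. ns (nat (j - 1 - s)) \<in> A j} \<in> sets noise_seq" if "j \<in> J" for j
    using measurable_sets[OF measurable_component_singleton[of "nat (j - 1 - s)" UNIV "\<lambda>_. \<mu>"], of "A j"] A[OF that]
    by (simp add: vimage_def)
  from sets.sets_Collect_finite_All[OF this J] have E: "E \<in> sets noise_seq"
    by (simp add: E_def)
  have "{\<omega>. \<forall>j\<in>J. noise j \<omega> \<in> A j} = {\<omega>. window s \<omega> \<in> C}"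
    using s by (auto simp: C_def noise_def window_def)
  moreover have "path -` C \<inter> space \<Omega> = UNIV \<times> E"
    by (auto simp: C_def E_def path_def space_pair_measure)
  ultimately have "emeasure law {\<omega>. \<forall>j\<in>J. noise j \<omega> \<in> A j} = emeasure noise_seq E"
    by (simp add: emeasure_window[OF C] emeasure_Omega_UNIV_Times[OF E])
  also have "\<dots> = (\<Prod>j\<in>J. emeasure \<mu> (A j))"
    unfolding E_def by (rule emeasure_noise_seq_shifted_cylinder[OF J s A])
  finally show ?thesis .
qed

lemma indep_noise: "prob_space.indep_vars law (\<lambda>_. borel) noise UNIV"
proof -
  have noise_sets_PiM: "sets (\<Pi>\<^sub>M i\<in>(UNIV::int set). \<mu>) = sets (\<Pi>\<^sub>M i\<in>(UNIV::int set). (borel :: (real^'m) measure))"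
    by (rule sets_PiM_cong) (simp_all add: noise_sets)
  have all: "(\<lambda>\<omega>. \<lambda>i\<in>UNIV. noise i \<omega>) \<in> law \<rightarrow>\<^sub>M (\<Pi>\<^sub>M i\<in>(UNIV::int set). borel)"
    by (rule measurable_restrict) (rule measurable_noise)
  have "distr law (\<Pi>\<^sub>M i\<in>UNIV. borel) (\<lambda>\<omega>. \<lambda>i\<in>UNIV. noise i \<omega>) = (\<Pi>\<^sub>M i\<in>(UNIV::int set). \<mu>)"
  proof (rule measure_eqI_PiM_infinite)
    show "finite_measure (distr law (\<Pi>\<^sub>M i\<in>UNIV. borel) (\<lambda>\<omega>. \<lambda>i\<in>UNIV. noise i \<omega>))"
      by (intro prob_space.finite_measure prob_space.prob_space_distr two_sided.P.prob_space_axioms all)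
    fix J :: "int set" and A :: "int \<Rightarrow> (real^'m) set"
    assume J: "finite J" "J \<subseteq> UNIV" and A: "\<And>i. i \<in> J \<Longrightarrow> A i \<in> sets \<mu>"
    have cyl: "prod_emb UNIV (\<lambda>_. \<mu>) J (PiE J A) \<in> sets (\<Pi>\<^sub>M i\<in>(UNIV::int set). borel)"
      using J A noise_sets_PiM by (auto intro: sets_PiM_I)
    have "emeasure (distr law (\<Pi>\<^sub>M i\<in>UNIV. borel) (\<lambda>\<omega>. \<lambda>i\<in>UNIV. noise i \<omega>)) (prod_emb UNIV (\<lambda>_. \<mu>) J (PiE J A))
        = emeasure law {\<omega>. \<forall>j\<in>J. noise j \<omega> \<in> A j}"
      by (subst emeasure_distr[OF all cyl])
         (auto simp: prod_emb_def PiE_iff space_PiM intro!: arg_cong[where f="emeasure law"])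
    also have "\<dots> = emeasure (\<Pi>\<^sub>M i\<in>(UNIV::int set). \<mu>) (prod_emb UNIV (\<lambda>_. \<mu>) J (PiE J A))"
      using emeasure_PiM_emb[OF noise_prob _ J(1) A] by (simp add: emeasure_noise_cylinder[OF J(1) A])
    finally show "emeasure (distr law (\<Pi>\<^sub>M i\<in>UNIV. borel) (\<lambda>\<omega>. \<lambda>i\<in>UNIV. noise i \<omega>)) (prod_emb UNIV (\<lambda>_. \<mu>) J (PiE J A))
        = emeasure (\<Pi>\<^sub>M i\<in>(UNIV::int set). \<mu>) (prod_emb UNIV (\<lambda>_. \<mu>) J (PiE J A))" .
  qed (simp_all add: noise_sets_PiM)
  moreover have "(\<Pi>\<^sub>M i\<in>UNIV. distr law borel (noise i)) = (\<Pi>\<^sub>M i\<in>(UNIV::int set). \<mu>)"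
    by (simp add: distr_noise)
  ultimately show ?thesis
    by (subst prob_space.indep_vars_iff_distr_eq_PiM[OF two_sided.P.prob_space_axioms _ measurable_noise])
       simp_all
qed

end

section \<open>Stationarity of \<open>(X, \<phi>)\<close>\<close>

locale jacobian_chain = invariant_chain a \<mu> \<pi>
  for a :: "real^'d \<Rightarrow> real^'m \<Rightarrow> real^'d" and \<mu> \<pi> +
  fixes Ga :: "real^'d \<Rightarrow> real^'m \<Rightarrow> real^'d^'d"
  assumes Ga_measurable: "(\<lambda>p. Ga (fst p) (snd p)) \<in> borel_measurable borel"
begin

abbreviation jac :: "(int \<Rightarrow> (real^'d) \<times> (real^'m)) \<Rightarrow> int \<Rightarrow> real^'d^'d" where
  "jac \<omega> \<equiv> \<lambda>s. Ga (state (s - 1) \<omega>) (noise s \<omega>)"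

lemma borel_measurable_Ga:
  assumes "f \<in> borel_measurable M" "g \<in> borel_measurable M"
  shows "(\<lambda>x. Ga (f x) (g x)) \<in> borel_measurable M"
proof -
  have "(\<lambda>x. (f x, g x)) \<in> borel_measurable M"
    using measurable_Pair[OF assms] by (simp only: borel_prod)
  from measurable_compose[OF this Ga_measurable] show ?thesis
    by simp
qed

lemma measurable_prodA_jac: "(\<lambda>\<omega>. prodA (jac \<omega>) t k) \<in> borel_measurable law"
  by (induction k)
     (simp_all add: borel_measurable_matrix_matrix_mult borel_measurable_Ga measurable_state measurable_noise)

lemma measurable_phi:
  fixes Gpsi :: "real^'d \<Rightarrow> real^'l^'d"
  assumes Gpsi: "Gpsi \<in> borel_measurable borel"
  shows "(\<lambda>\<omega>. phi \<alpha> (jac \<omega>) Gpsi (\<lambda>s. state s \<omega>) t) \<in> borel_measurable law"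
proof -
  have "(\<lambda>\<omega>. phi_term \<alpha> (jac \<omega>) Gpsi (\<lambda>s. state s \<omega>) t k) \<in> borel_measurable law" for k
    unfolding phi_term_def
    by (intro borel_measurable_scaleR borel_measurable_const borel_measurable_matrix_matrix_mult
          borel_measurable_transpose measurable_prodA_jac measurable_compose[OF measurable_state Gpsi])
  then show ?thesis
    unfolding phi_def suminf_def sums_def lim_def[symmetric]
    by (intro borel_measurable_lim_metric borel_measurable_sum)
qed

lemma stationary_state_phi:
  fixes Gpsi :: "real^'d \<Rightarrow> real^'l^'d"
  assumes Gpsi: "Gpsi \<in> borel_measurable borel"
  shows "distr law (\<Pi>\<^sub>M t\<in>(UNIV::int set). borel)
           (\<lambda>\<omega> t. (state (t + k) \<omega>, phi \<alpha> (jac \<omega>) Gpsi (\<lambda>s. state s \<omega>) (t + k)))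
       = distr law (\<Pi>\<^sub>M t\<in>(UNIV::int set). borel)
           (\<lambda>\<omega> t. (state t \<omega>, phi \<alpha> (jac \<omega>) Gpsi (\<lambda>s. state s \<omega>) t))"
proof -
  define G where "G \<omega> t = (state t \<omega>, phi \<alpha> (jac \<omega>) Gpsi (\<lambda>s. state s \<omega>) t)" for \<omega> t
  have G: "G \<in> bipath_space \<rightarrow>\<^sub>M (\<Pi>\<^sub>M t\<in>(UNIV::int set). (borel :: ((real^'d) \<times> (real^'l^'d)) measure))"
  proof (rule measurable_PiM_single')
    fix t
    show "(\<lambda>\<omega>. G \<omega> t) \<in> borel_measurable bipath_space"
      using measurable_Pair[OF measurable_state measurable_phi[OF Gpsi], of t \<alpha> t]
      by (simp add: G_def borel_prod measurable_law_iff)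
  qed simp
  have shift: "(\<lambda>\<omega> t. \<omega> (t + k)) \<in> law \<rightarrow>\<^sub>M bipath_space"
    unfolding measurable_law_iff
    by (rule measurable_PiM_single') (auto intro: measurable_component_singleton)
  have "(\<lambda>\<omega> t. (state (t + k) \<omega>, phi \<alpha> (jac \<omega>) Gpsi (\<lambda>s. state s \<omega>) (t + k)))
      = G \<circ> (\<lambda>\<omega> t. \<omega> (t + k))"
    using phi_shift[of \<alpha> "jac _" k Gpsi "\<lambda>s. state s _"]
    by (auto simp: fun_eq_iff G_def state_def noise_def algebra_simps)
  then have "distr law (\<Pi>\<^sub>M t\<in>UNIV. borel)
      (\<lambda>\<omega> t. (state (t + k) \<omega>, phi \<alpha> (jac \<omega>) Gpsi (\<lambda>s. state s \<omega>) (t + k)))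
      = distr law (\<Pi>\<^sub>M t\<in>UNIV. borel) G"
    using distr_distr[OF G shift] by (simp add: distr_law_shift)
  then show ?thesis
    by (simp add: G_def[abs_def])
qed

end

section \<open>Almost sure convergence of the series for \<open>\<phi>\<close>\<close>

locale sensitivity_chain = jacobian_chain a \<mu> \<pi> Ga
  for a :: "real^'d \<Rightarrow> real^'m \<Rightarrow> real^'d" and \<mu> \<pi> Ga +
  fixes \<psi> :: "real^'d \<Rightarrow> real^'l" and Gpsi :: "real^'d \<Rightarrow> real^'l^'d"
    and v :: "real^'d \<Rightarrow> real" and \<alpha> :: real
  assumes alpha: "\<bar>\<alpha>\<bar> \<le> 1"
    and psi_deriv: "\<And>x. (\<psi> has_derivative (\<lambda>h. h v* Gpsi x)) (at x)"
    and Gpsi_cont: "continuous_on UNIV Gpsi"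
    and psi_L: "in_Linf_v v (\<lambda>x. (norm (\<psi> x))\<^sup>2)"
    and Gpsi_L: "in_Linf_v v (\<lambda>x. (norm (Gpsi x))\<^sup>2)"
    and v_ge1: "\<And>x. 1 \<le> v x"
    and A3: "\<forall>(f :: real^'d \<Rightarrow> real) (g :: real^'d \<Rightarrow> real) gf gg.
         (\<forall>x. (f has_derivative (\<lambda>h. gf x \<bullet> h)) (at x)) \<and> continuous_on UNIV gf \<and>
         (\<forall>x. (g has_derivative (\<lambda>h. gg x \<bullet> h)) (at x)) \<and> continuous_on UNIV gg \<and>
         in_Linf_v v (\<lambda>x. (f x)\<^sup>2) \<and> in_Linf_v v (\<lambda>x. (g x)\<^sup>2) \<and>
         in_Linf_v v (\<lambda>x. (norm (gf x))\<^sup>2) \<and> in_Linf_v v (\<lambda>x. (norm (gg x))\<^sup>2) \<longrightarrow>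
         summable (\<lambda>t. \<bar>\<integral>\<omega>. gf (chain a (fst \<omega>) (snd \<omega>) t) \<bullet>
                                 (sens Ga a (fst \<omega>) (snd \<omega>) t *v gg (fst \<omega>))
                           \<partial>(\<pi> \<Otimes>\<^sub>M (\<Pi>\<^sub>M i\<in>(UNIV::nat set). \<mu>))\<bar>) \<and>
         (\<Sum>t. \<integral>\<^sup>+\<omega>. ennreal \<bar>gf (chain a (fst \<omega>) (snd \<omega>) t) \<bullet>
                                 (sens Ga a (fst \<omega>) (snd \<omega>) t *v gg (fst \<omega>))\<bar>
                           \<partial>(\<pi> \<Otimes>\<^sub>M (\<Pi>\<^sub>M i\<in>(UNIV::nat set). \<mu>))) < \<top>"
begin

lemma Gpsi_measurable: "Gpsi \<in> borel_measurable borel"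
  by (rule borel_measurable_continuous_onI[OF Gpsi_cont])

lemma continuous_on_psi: "continuous_on UNIV \<psi>"
  using psi_deriv by (intro has_derivative_continuous_on) auto

lemma continuous_on_column_Gpsi: "continuous_on UNIV (\<lambda>x. column j (Gpsi x))"
  unfolding column_def by (intro continuous_intros continuous_on_vec_lambda Gpsi_cont)

lemma suminf_nn_integral_trig_sens_finite:
  "(\<Sum>k. \<integral>\<^sup>+\<omega>. ennreal \<bar>trig_grad b i (chain a (fst \<omega>) (snd \<omega>) k) \<bullet>
       (sens Ga a (fst \<omega>) (snd \<omega>) k *v column j (Gpsi (fst \<omega>)))\<bar> \<partial>\<Omega>) < \<top>"
proof -
  have "((\<lambda>x. \<psi> x $ j) has_derivative (\<lambda>h. column j (Gpsi x) \<bullet> h)) (at x)" for x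
    using bounded_linear.has_derivative[OF bounded_linear_vec_nth psi_deriv, of j x]
    by (simp add: vector_matrix_mult_nth)
  moreover have "in_Linf_v v (\<lambda>x. (trig_coord b i x)\<^sup>2)"
    using v_ge1 continuous_on_trig_coord
    by (intro in_Linf_v_bounded borel_measurable_continuous_onI continuous_intros)
       (auto simp: trig_coord_def abs_square_le_1 abs_sin_le_one abs_cos_le_one)
  moreover have "in_Linf_v v (\<lambda>x. (norm (trig_grad b i x))\<^sup>2)"
    using v_ge1 continuous_on_trig_grad
    by (intro in_Linf_v_bounded borel_measurable_continuous_onI continuous_intros)
       (auto simp: trig_grad_def abs_square_le_1 abs_sin_le_one abs_cos_le_one)
  moreover have "in_Linf_v v (\<lambda>x. (\<psi> x $ j)\<^sup>2)"
  proof (rule in_Linf_v_mono[OF _ _ _ psi_L])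
    show "(\<lambda>x. (\<psi> x $ j)\<^sup>2) \<in> borel_measurable borel"
      by (intro borel_measurable_continuous_onI continuous_intros continuous_on_psi)
    show "\<bar>(\<psi> x $ j)\<^sup>2\<bar> \<le> \<bar>(norm (\<psi> x))\<^sup>2\<bar>" for x
      using power_mono[OF component_le_norm_cart[of "\<psi> x" j] abs_ge_zero, of 2] by simp
  qed (use v_ge1 in \<open>auto intro: order_trans[OF zero_le_one]\<close>)
  moreover have "in_Linf_v v (\<lambda>x. (norm (column j (Gpsi x)))\<^sup>2)"
  proof (rule in_Linf_v_mono[OF _ _ _ Gpsi_L])
    show "(\<lambda>x. (norm (column j (Gpsi x)))\<^sup>2) \<in> borel_measurable borel"
      by (intro borel_measurable_continuous_onI continuous_intros continuous_on_column_Gpsi)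
    show "\<bar>(norm (column j (Gpsi x)))\<^sup>2\<bar> \<le> \<bar>(norm (Gpsi x))\<^sup>2\<bar>" for x
      using norm_column_le[of j "Gpsi x"] by (simp add: abs_le_square_iff)
  qed (use v_ge1 in \<open>auto intro: order_trans[OF zero_le_one]\<close>)
  ultimately show ?thesis
    using A3[rule_format, where f = "trig_coord b i" and g = "\<lambda>x. \<psi> x $ j"
        and gf = "trig_grad b i" and gg = "\<lambda>x. column j (Gpsi x)"]
      trig_coord_has_derivative continuous_on_trig_grad continuous_on_column_Gpsi
    by blast
qed

definition trig_sens_term :: "bool \<Rightarrow> 'd \<Rightarrow> 'l \<Rightarrow> nat \<Rightarrow> (nat \<Rightarrow> (real^'d) \<times> (real^'m)) \<Rightarrow> real" where
  "trig_sens_term b i j k y =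
     \<bar>trig_grad b i (fst (y k)) \<bullet> (path_sens Ga y k *v column j (Gpsi (fst (y 0))))\<bar>"

lemma trig_sens_term_path:
  "trig_sens_term b i j k (path z) = \<bar>trig_grad b i (chain a (fst z) (snd z) k) \<bullet>
     (sens Ga a (fst z) (snd z) k *v column j (Gpsi (fst z)))\<bar>"
  using path_sens_chain[of Ga a "fst z" "snd z" k] by (simp add: trig_sens_term_def path_def)

lemma measurable_trig_sens_term: "trig_sens_term b i j k \<in> borel_measurable path_space"
proof -
  have "(\<lambda>y. path_sens Ga y k) \<in> borel_measurable path_space"
    by (induction k) (simp_all add: borel_measurable_matrix_matrix_mult borel_measurable_transpose
        borel_measurable_Ga measurable_path_component)
  moreover have "(\<lambda>y. column j (Gpsi (fst (y 0)))) \<in> borel_measurable path_space"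
    using measurable_compose[OF measurable_path_component(1)
        borel_measurable_continuous_onI[OF continuous_on_column_Gpsi]] .
  moreover have "(\<lambda>y. trig_grad b i (fst (y k))) \<in> borel_measurable path_space"
    using measurable_compose[OF measurable_path_component(1)
        borel_measurable_continuous_onI[OF continuous_on_trig_grad]] .
  ultimately show ?thesis
    unfolding trig_sens_term_def[abs_def]
    by (intro borel_measurable_abs borel_measurable_inner borel_measurable_matrix_vector_mult)
qed

lemma norm_phi_term_le:
  "norm (phi_term \<alpha> (jac \<omega>) Gpsi (\<lambda>s. state s \<omega>) t k)
     \<le> (\<Sum>i\<in>UNIV. \<Sum>j\<in>UNIV. \<Sum>b\<in>UNIV. trig_sens_term b i j k (window (t - int k) \<omega>))"
proof -
  let ?y = "window (t - int k) \<omega>"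
  have "jac \<omega> = (\<lambda>s. Ga (fst (\<omega> (s - 1))) (snd (\<omega> (s - 1))))"
    by (simp add: state_def noise_def)
  then have "transpose (prodA (jac \<omega>) t k) = path_sens Ga ?y k"
    by (simp add: transpose_prodA_path_sens window_def)
  then have "norm (phi_term \<alpha> (jac \<omega>) Gpsi (\<lambda>s. state s \<omega>) t k)
      = \<bar>\<alpha>\<bar> ^ k * norm (path_sens Ga ?y k ** Gpsi (fst (?y 0)))"
    by (simp add: phi_term_def state_def window_def power_abs)
  also have "\<dots> \<le> norm (path_sens Ga ?y k ** Gpsi (fst (?y 0)))"
    using alpha by (intro mult_left_le_one_le) (simp_all add: power_le_one)
  also have "\<dots> \<le> (\<Sum>i\<in>UNIV. \<Sum>j\<in>UNIV. \<Sum>b\<in>UNIV. trig_sens_term b i j k ?y)"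
    unfolding trig_sens_term_def by (rule norm_matrix_mult_le_trig_grad_sum)
  finally show ?thesis .
qed

lemma nn_integral_norm_phi_term_le:
  "(\<integral>\<^sup>+\<omega>. ennreal (norm (phi_term \<alpha> (jac \<omega>) Gpsi (\<lambda>s. state s \<omega>) t k)) \<partial>law)
     \<le> (\<Sum>i\<in>UNIV. \<Sum>j\<in>UNIV. \<Sum>b\<in>UNIV. \<integral>\<^sup>+z. ennreal (trig_sens_term b i j k (path z)) \<partial>\<Omega>)"
proof -
  have meas: "(\<lambda>y. ennreal (trig_sens_term b i j k y)) \<in> borel_measurable path_space" for b i j
    using measurable_compose[OF measurable_trig_sens_term measurable_ennreal] by simp
  have "ennreal (norm (phi_term \<alpha> (jac \<omega>) Gpsi (\<lambda>s. state s \<omega>) t k))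
      \<le> (\<Sum>i\<in>UNIV. \<Sum>j\<in>UNIV. \<Sum>b\<in>UNIV. ennreal (trig_sens_term b i j k (window (t - int k) \<omega>)))" for \<omega>
    using ennreal_leI[OF norm_phi_term_le] by (simp add: trig_sens_term_def sum_ennreal sum_nonneg)
  then have "(\<integral>\<^sup>+\<omega>. ennreal (norm (phi_term \<alpha> (jac \<omega>) Gpsi (\<lambda>s. state s \<omega>) t k)) \<partial>law)
      \<le> (\<integral>\<^sup>+\<omega>. (\<Sum>i\<in>UNIV. \<Sum>j\<in>UNIV. \<Sum>b\<in>UNIV. ennreal (trig_sens_term b i j k (window (t - int k) \<omega>))) \<partial>law)"
    by (rule nn_integral_mono)
  also have "\<dots> = (\<Sum>i\<in>UNIV. \<Sum>j\<in>UNIV. \<Sum>b\<in>UNIV. \<integral>\<^sup>+\<omega>. ennreal (trig_sens_term b i j k (window (t - int k) \<omega>)) \<partial>law)"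
    by (rule nn_integral_sum3) (rule measurable_compose[OF measurable_window meas])
  also have "\<dots> = (\<Sum>i\<in>UNIV. \<Sum>j\<in>UNIV. \<Sum>b\<in>UNIV. \<integral>\<^sup>+z. ennreal (trig_sens_term b i j k (path z)) \<partial>\<Omega>)"
    by (simp add: nn_integral_window[OF meas])
  finally show ?thesis .
qed

lemma suminf_nn_integral_norm_phi_term_finite:
  "(\<Sum>k. \<integral>\<^sup>+\<omega>. ennreal (norm (phi_term \<alpha> (jac \<omega>) Gpsi (\<lambda>s. state s \<omega>) t k)) \<partial>law) < \<top>"
proof -
  have "(\<Sum>k. \<integral>\<^sup>+\<omega>. ennreal (norm (phi_term \<alpha> (jac \<omega>) Gpsi (\<lambda>s. state s \<omega>) t k)) \<partial>law)
      \<le> (\<Sum>k. \<Sum>i\<in>UNIV. \<Sum>j\<in>UNIV. \<Sum>b\<in>UNIV. \<integral>\<^sup>+z. ennreal (trig_sens_term b i j k (path z)) \<partial>\<Omega>)"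
    by (intro suminf_le nn_integral_norm_phi_term_le) simp_all
  also have "\<dots> = (\<Sum>i\<in>UNIV. \<Sum>j\<in>UNIV. \<Sum>b\<in>UNIV. \<Sum>k. \<integral>\<^sup>+z. ennreal (trig_sens_term b i j k (path z)) \<partial>\<Omega>)"
    by (simp add: suminf_sum)
  also have "\<dots> < \<top>"
    using suminf_nn_integral_trig_sens_finite by (simp add: trig_sens_term_path ennreal_sum_less_top)
  finally show ?thesis .
qed

lemma AE_summable_phi_term: "AE \<omega> in law. \<forall>t. summable (phi_term \<alpha> (jac \<omega>) Gpsi (\<lambda>s. state s \<omega>) t)"
proof (rule AE_all_countable[THEN iffD2], rule allI)
  fix t
  have "(\<lambda>\<omega>. phi_term \<alpha> (jac \<omega>) Gpsi (\<lambda>s. state s \<omega>) t k) \<in> borel_measurable law" for k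
    unfolding phi_term_def
    by (intro borel_measurable_scaleR borel_measurable_const borel_measurable_matrix_matrix_mult
          borel_measurable_transpose measurable_prodA_jac measurable_compose[OF measurable_state Gpsi_measurable])
  then show "AE \<omega> in law. summable (phi_term \<alpha> (jac \<omega>) Gpsi (\<lambda>s. state s \<omega>) t)"
    using suminf_nn_integral_norm_phi_term_finite by (rule AE_summable_if_nn_integral_suminf_finite)
qed

end

theorem lemma4:
  fixes a :: "real^'d \<Rightarrow> real^'m \<Rightarrow> real^'d"
    and Ga :: "real^'d \<Rightarrow> real^'m \<Rightarrow> real^'d^'d"
    and \<mu> :: "(real^'m) measure"
    and v :: "real^'d \<Rightarrow> real"
    and \<pi> :: "(real^'d) measure"
    and b0 \<rho>0 \<alpha> :: real
    and \<psi> :: "real^'d \<Rightarrow> real^'l"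
    and Gpsi :: "real^'d \<Rightarrow> real^'l^'d"
  assumes noise_prob: "prob_space \<mu>" and noise_sets: "sets \<mu> = sets borel"
    and a_cont: "continuous_on UNIV (\<lambda>(x, n). a x n)"
    and v_cont: "continuous_on UNIV v" and v_ge1: "\<forall>x. 1 \<le> v x"
    \<comment> \<open>(A1) v-uniform ergodicity\<close>
    and pi_prob: "prob_space \<pi>" and pi_sets: "sets \<pi> = sets borel"
    and pi_inv: "invariant_for a \<mu> \<pi>"
    and pi_unique: "\<forall>\<pi>'. prob_space \<pi>' \<and> sets \<pi>' = sets borel \<and> invariant_for a \<mu> \<pi>' \<longrightarrow> \<pi>' = \<pi>"
    and rho0: "0 < \<rho>0" "\<rho>0 < 1"
    and ergodic: "\<forall>f t x. in_Linf_v v f \<longrightarrow>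
         \<bar>Ex_chain a \<mu> x f t - (\<integral>y. f y \<partial>\<pi>)\<bar> \<le> b0 * \<rho>0 ^ t * vnorm v f * v x"
    \<comment> \<open>(A2)\<close>
    and a_deriv: "\<forall>x n. ((\<lambda>y. a y n) has_derivative (\<lambda>h. h v* Ga x n)) (at x)"
    and Ga_cont: "\<forall>n. continuous_on UNIV (\<lambda>x. Ga x n)"
    and Ga_bdd: "\<exists>B. \<forall>x n. norm (Ga x n) \<le> B"
    \<comment> \<open>(A3)\<close>
    and A3: "\<forall>(f :: real^'d \<Rightarrow> real) (g :: real^'d \<Rightarrow> real) gf gg.
         (\<forall>x. (f has_derivative (\<lambda>h. gf x \<bullet> h)) (at x)) \<and> continuous_on UNIV gf \<and>
         (\<forall>x. (g has_derivative (\<lambda>h. gg x \<bullet> h)) (at x)) \<and> continuous_on UNIV gg \<and>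
         in_Linf_v v (\<lambda>x. (f x)\<^sup>2) \<and> in_Linf_v v (\<lambda>x. (g x)\<^sup>2) \<and>
         in_Linf_v v (\<lambda>x. (norm (gf x))\<^sup>2) \<and> in_Linf_v v (\<lambda>x. (norm (gg x))\<^sup>2) \<longrightarrow>
         summable (\<lambda>t. \<bar>\<integral>\<omega>. gf (chain a (fst \<omega>) (snd \<omega>) t) \<bullet>
                                 (sens Ga a (fst \<omega>) (snd \<omega>) t *v gg (fst \<omega>))
                           \<partial>(\<pi> \<Otimes>\<^sub>M (\<Pi>\<^sub>M i\<in>(UNIV::nat set). \<mu>))\<bar>) \<and>
         (\<Sum>t. \<integral>\<^sup>+\<omega>. ennreal \<bar>gf (chain a (fst \<omega>) (snd \<omega>) t) \<bullet>
                                 (sens Ga a (fst \<omega>) (snd \<omega>) t *v gg (fst \<omega>))\<bar>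
                           \<partial>(\<pi> \<Otimes>\<^sub>M (\<Pi>\<^sub>M i\<in>(UNIV::nat set). \<mu>))) < \<top>"
    and alpha: "0 < \<alpha>" "\<alpha> < 1"
    and psi_deriv: "\<forall>x. (\<psi> has_derivative (\<lambda>h. h v* Gpsi x)) (at x)"
    and Gpsi_cont: "continuous_on UNIV Gpsi"
    and psi_L: "in_Linf_v v (\<lambda>x. (norm (\<psi> x))\<^sup>2)"
    and Gpsi_L: "in_Linf_v v (\<lambda>x. (norm (Gpsi x))\<^sup>2)"
  shows "\<exists>(M :: (int \<Rightarrow> (real^'d) \<times> (real^'m)) measure)
            (X :: int \<Rightarrow> (int \<Rightarrow> (real^'d) \<times> (real^'m)) \<Rightarrow> real^'d)
            (N :: int \<Rightarrow> (int \<Rightarrow> (real^'d) \<times> (real^'m)) \<Rightarrow> real^'m).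
      prob_space M \<and>
      (\<forall>t. X t \<in> borel_measurable M \<and> N t \<in> borel_measurable M) \<and>
      prob_space.indep_vars M (\<lambda>_. borel) N UNIV \<and>
      (\<forall>t. distr M borel (N t) = \<mu>) \<and>
      (AE \<omega> in M. \<forall>t. X (t + 1) \<omega> = a (X t \<omega>) (N (t + 1) \<omega>)) \<and>
      (\<forall>t. \<forall>A\<in>sets borel. \<forall>B\<in>sets (\<Pi>\<^sub>M s\<in>(UNIV::nat set). (borel :: (real^'m) measure)).
         measure M {\<omega>\<in>space M. X t \<omega> \<in> A \<and> (\<lambda>s. N (t + 1 + int s) \<omega>) \<in> B}
         = measure M {\<omega>\<in>space M. X t \<omega> \<in> A} *
           measure M {\<omega>\<in>space M. (\<lambda>s. N (t + 1 + int s) \<omega>) \<in> B}) \<and>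
      (\<forall>t. distr M borel (X t) = \<pi>) \<and>
      (AE \<omega> in M. \<forall>t. summable
          (phi_term \<alpha> (\<lambda>s. Ga (X (s - 1) \<omega>) (N s \<omega>)) Gpsi (\<lambda>s. X s \<omega>) t)) \<and>
      (\<forall>k::int.
         distr M (\<Pi>\<^sub>M t\<in>(UNIV::int set). borel)
           (\<lambda>\<omega> t. (X (t + k) \<omega>, phi \<alpha> (\<lambda>s. Ga (X (s - 1) \<omega>) (N s \<omega>)) Gpsi (\<lambda>s. X s \<omega>) (t + k)))
       = distr M (\<Pi>\<^sub>M t\<in>(UNIV::int set). borel)
           (\<lambda>\<omega> t. (X t \<omega>, phi \<alpha> (\<lambda>s. Ga (X (s - 1) \<omega>) (N s \<omega>)) Gpsi (\<lambda>s. X s \<omega>) t)))"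
proof -
  have "invariant_chain a \<mu> \<pi>"
    by (rule invariant_chain.intro) fact+
  moreover have "(\<lambda>p. Ga (fst p) (snd p)) \<in> borel_measurable borel"
    using a_cont a_deriv by (intro borel_measurable_jacobian) auto
  ultimately have "jacobian_chain a \<mu> \<pi> Ga"
    by (intro jacobian_chain.intro jacobian_chain_axioms.intro)
  moreover have "\<bar>\<alpha>\<bar> \<le> 1"
    using alpha by simp
  ultimately interpret sensitivity_chain a \<mu> \<pi> Ga \<psi> Gpsi v \<alpha>
    by (intro sensitivity_chain.intro sensitivity_chain_axioms.intro Gpsi_cont psi_L Gpsi_L A3)
       (use psi_deriv v_ge1 in auto)
  show ?thesis
    by (intro exI[of _ law] exI[of _ state] exI[of _ noise] conjI allI ballI
        two_sided.P.prob_space_axioms measurable_state measurable_noise indep_noise distr_noise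
        AE_state_recursion indep_state_future_noise distr_state AE_summable_phi_term
        stationary_state_phi[OF Gpsi_measurable])
qed

end
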